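(* Let $P_0>0$, $P_1>0$, $c>0$ be real numbers and let $a_1,b_1,h,g$ be nonzero complex numbers. Define $L'=P_0(|a_1|^2+|h|^2)$, $M'=2P_0|a_1||h|$, $N'=P_1(|b_1|^2+|g|^2)+c$, $P'=2P_1|b_1||g|$, $s=\angle a_1-\angle h$, $t=\angle b_1-\angle g$ (where $\angle z$ denotes the argument of $z$), and consider the function of $x\in\mathbb{R}$ $$\gamma_1(x)=\frac{P_0|a_1e^{jx}+h|^2}{P_1|b_1e^{jx}+g|^2+c}=\frac{L'+M'\cos(s+x)}{N'+P'\cos(t+x)}.$$ Let $C'=(L'P')^2+(M'N')^2-2L'M'N'P'\cos(s-t)$. Then at every stationary point $x^*$ of $\gamma_1$ (i.e. $\gamma_1'(x^* )=0$), the value $\gamma_1^*=\gamma_1(x^* )$ equals one of the two values $$\gamma_1^*=\frac{L'}{N'}-\frac{1}{N'}\,\frac{C'}{P'\bigl(L'P'-M'N'\cos(s-t)\bigr)\pm N'\sqrt{C'-\bigl(M'P'\sin(s-t)\bigr)^2}}.$$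
   Context: This is the SINR of a receiver assisted by a one-element passive reconfigurable surface with phase shift $\theta_1=e^{jx}$, one interferer, reflected signal channel $a_1$, reflected interferer channel $b_1$, direct signal channel $h$, direct interferer channel $g$, noise power $c$, and transmit powers $P_0,P_1$. *)

theory Defs
  imports "HOL-Analysis.Analysis"
begin

definition gamma1 :: "real \<Rightarrow> real \<Rightarrow> real \<Rightarrow> complex \<Rightarrow> complex \<Rightarrow> complex \<Rightarrow> complex \<Rightarrow> real \<Rightarrow> real" where
  "gamma1 P0 P1 c a1 b1 h g x =
     (P0 * (cmod (a1 * cis x + h))\<^sup>2) / (P1 * (cmod (b1 * cis x + g))\<^sup>2 + c)"

end

theory Submission
  imports Defs
begin

text \<open>Since \<open>|a e^(jx) + h|^2 = |a|^2 + |h|^2 + 2 |a| |h| cos (\<angle>a - \<angle>h + x)\<close>, the SINR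
  is a ratio of sinusoids \<open>(L + M cos (s + x)) / (N + P cos (t + x))\<close> with \<open>N > P \<ge> 0\<close>.
  At a stationary point with value \<open>\<gamma>\<close>, the equation \<open>numerator = \<gamma> \<cdot> denominator\<close> and its
  derivative combine to \<open>M e^(j(s - t)) - \<gamma> P = (\<gamma> N - L) e^(-j(t + x))\<close>. Taking moduli
  eliminates \<open>x\<close> and leaves a quadratic equation for \<open>L - N \<gamma>\<close>; its two roots, written
  as \<open>C / (B \<plusminus> S)\<close>, are the two stated values.\<close>

lemma cmod_mult_cis_add_squared:
  "(cmod (a * cis x + h))\<^sup>2 = (cmod a)\<^sup>2 + (cmod h)\<^sup>2 + 2 * cmod a * cmod h * cos (Arg a - Arg h + x)"
proof -
  define r q \<alpha> \<beta> where "r = cmod a" and "q = cmod h" and "\<alpha> = Arg a" and "\<beta> = Arg h"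
  have "a * cis x = rcis r \<alpha> * rcis 1 x" and "h = rcis q \<beta>"
    by (simp_all add: r_def q_def \<alpha>_def \<beta>_def rcis_cmod_Arg flip: cis_rcis_eq)
  then have "a * cis x + h = rcis r (\<alpha> + x) + rcis q \<beta>"
    by (simp add: rcis_mult)
  then have "(cmod (a * cis x + h))\<^sup>2 = (r * cos (\<alpha> + x) + q * cos \<beta>)\<^sup>2 + (r * sin (\<alpha> + x) + q * sin \<beta>)\<^sup>2"
    by (simp add: cmod_def rcis_def)
  also have "\<dots> = r\<^sup>2 + q\<^sup>2 + 2 * r * q * cos ((\<alpha> + x) - \<beta>)"
    unfolding cos_diff using sin_cos_squared_add[of "\<alpha> + x"] sin_cos_squared_add[of \<beta>] by algebra
  also have "(\<alpha> + x) - \<beta> = \<alpha> - \<beta> + x"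
    by simp
  finally show ?thesis
    by (simp add: r_def q_def \<alpha>_def \<beta>_def)
qed

lemma gamma1_eq_cos_ratio:
  "gamma1 P0 P1 c a1 b1 h g x =
     (P0 * ((cmod a1)\<^sup>2 + (cmod h)\<^sup>2) + 2 * P0 * cmod a1 * cmod h * cos (Arg a1 - Arg h + x)) /
     (P1 * ((cmod b1)\<^sup>2 + (cmod g)\<^sup>2) + c + 2 * P1 * cmod b1 * cmod g * cos (Arg b1 - Arg g + x))"
  unfolding gamma1_def cmod_mult_cis_add_squared by (simp add: algebra_simps)

lemma cos_ratio_deriv_zero_imp:
  fixes L M N P s t x :: real
  assumes "N + P * cos (t + x) \<noteq> 0"
    and "((\<lambda>x. (L + M * cos (s + x)) / (N + P * cos (t + x))) has_real_derivative 0) (at x)"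
  shows "M * sin (s + x) * (N + P * cos (t + x)) = P * sin (t + x) * (L + M * cos (s + x))"
proof -
  have "((\<lambda>x. (L + M * cos (s + x)) / (N + P * cos (t + x))) has_real_derivative
      (- M * sin (s + x) * (N + P * cos (t + x)) + (L + M * cos (s + x)) * P * sin (t + x))
        / (N + P * cos (t + x))\<^sup>2) (at x)"
    using assms(1) by (auto intro!: derivative_eq_intros simp: power2_eq_square)
  with assms show ?thesis
    by (auto dest: DERIV_unique simp: algebra_simps)
qed

lemma stationary_value_circle_identity:
  fixes \<gamma> L M N P \<delta> \<theta> :: real
  assumes "L + M * cos (\<delta> + \<theta>) = \<gamma> * (N + P * cos \<theta>)"
    and "M * sin (\<delta> + \<theta>) = \<gamma> * P * sin \<theta>"
  shows "M\<^sup>2 - 2 * \<gamma> * P * M * cos \<delta> + \<gamma>\<^sup>2 * P\<^sup>2 = (\<gamma> * N - L)\<^sup>2"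
proof -
  have circ: "(cos \<theta>)\<^sup>2 + (sin \<theta>)\<^sup>2 = 1" "(cos \<delta>)\<^sup>2 + (sin \<delta>)\<^sup>2 = 1"
    by simp_all
  have "M * cos \<delta> - \<gamma> * P = (\<gamma> * N - L) * cos \<theta>" "M * sin \<delta> = - (\<gamma> * N - L) * sin \<theta>"
    using assms circ(1) unfolding cos_add sin_add by algebra+
  then show ?thesis
    using circ by algebra
qed

text \<open>This form loses
  the root \<open>2 B / a\<close> when \<open>C = 0 \<noteq> B\<close>, hence the last hypothesis.\<close>
lemma quadratic_root_reciprocal_form:
  fixes a B C S y :: real
  assumes "a * y\<^sup>2 - 2 * B * y + C = 0" "S\<^sup>2 = B\<^sup>2 - a * C" "S \<ge> 0" "a \<noteq> 0"
    and "C = 0 \<Longrightarrow> B = 0"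
  shows "\<exists>\<sigma>::real. (\<sigma> = 1 \<or> \<sigma> = -1) \<and> y = C / (B + \<sigma> * S)"
proof -
  have "(a * y - B)\<^sup>2 = S\<^sup>2"
    using assms(1,2) by algebra
  then obtain \<tau> :: real where \<tau>: "\<tau> = 1 \<or> \<tau> = -1" "a * y - B = \<tau> * S"
    by (metis power2_eq_iff mult_1 mult_minus1)
  have prod: "y * (B - \<tau> * S) = C"
    using assms(1) \<tau>(2) by algebra
  show ?thesis
  proof (cases "B - \<tau> * S = 0")
    case False
    then have "y = C / (B + (- \<tau>) * S)"
      using prod by (simp add: field_simps)
    then show ?thesis
      using \<tau>(1) by (metis minus_minus)
  next
    case True
    then have "C = 0" "B = 0"
      using prod assms(5) by auto
    then have "y = 0"
      using True \<tau> assms(4) by auto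
    then show ?thesis
      using \<open>C = 0\<close> by (intro exI[of _ 1]) simp
  qed
qed

lemma cos_ratio_stationary_quadratic:
  fixes L M N P s t x :: real
  assumes "\<bar>P\<bar> < N"
    and "((\<lambda>x. (L + M * cos (s + x)) / (N + P * cos (t + x))) has_real_derivative 0) (at x)"
  defines "y \<equiv> L - N * ((L + M * cos (s + x)) / (N + P * cos (t + x)))"
  shows "(P\<^sup>2 - N\<^sup>2) * y\<^sup>2 - 2 * (P * (L * P - M * N * cos (s - t))) * y
           + ((L * P)\<^sup>2 + (M * N)\<^sup>2 - 2 * L * M * N * P * cos (s - t)) = 0"
proof -
  define \<gamma> \<theta> \<delta> where "\<gamma> = (L + M * cos (s + x)) / (N + P * cos (t + x))"
    and "\<theta> = t + x" and "\<delta> = s - t"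
  have "\<bar>P * cos \<theta>\<bar> \<le> \<bar>P\<bar>"
    by (simp add: abs_mult mult_left_le)
  then have den: "N + P * cos \<theta> \<noteq> 0"
    using assms(1) by linarith
  have s_x: "s + x = \<delta> + \<theta>"
    by (simp add: \<delta>_def \<theta>_def)
  have ratio: "L + M * cos (\<delta> + \<theta>) = \<gamma> * (N + P * cos \<theta>)"
    using den by (simp add: \<gamma>_def s_x \<theta>_def)
  have "M * sin (\<delta> + \<theta>) * (N + P * cos \<theta>) = \<gamma> * P * sin \<theta> * (N + P * cos \<theta>)"
    using cos_ratio_deriv_zero_imp[OF _ assms(2)] den ratio by (simp add: s_x \<theta>_def)
  then have "M * sin (\<delta> + \<theta>) = \<gamma> * P * sin \<theta>"
    using den by simp
  from stationary_value_circle_identity[OF ratio this] show ?thesis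
    unfolding y_def \<gamma>_def[symmetric] \<delta>_def[symmetric] by algebra
qed

lemma cos_ratio_stationary_value:
  fixes L M N P s t x :: real
  assumes "\<bar>P\<bar> < N"
    and "((\<lambda>x. (L + M * cos (s + x)) / (N + P * cos (t + x))) has_real_derivative 0) (at x)"
  defines "C \<equiv> (L * P)\<^sup>2 + (M * N)\<^sup>2 - 2 * L * M * N * P * cos (s - t)"
  shows "\<exists>\<sigma>::real. (\<sigma> = 1 \<or> \<sigma> = -1) \<and>
           (L + M * cos (s + x)) / (N + P * cos (t + x)) =
             L / N - (1 / N) * (C / (P * (L * P - M * N * cos (s - t))
               + \<sigma> * N * sqrt (C - (M * P * sin (s - t))\<^sup>2)))"
proof -
  define y a B X where "y = L - N * ((L + M * cos (s + x)) / (N + P * cos (t + x)))"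
    and "a = P\<^sup>2 - N\<^sup>2" and "B = P * (L * P - M * N * cos (s - t))"
    and "X = C - (M * P * sin (s - t))\<^sup>2"
  have quadratic: "a * y\<^sup>2 - 2 * B * y + C = 0"
    using cos_ratio_stationary_quadratic[OF assms(1,2)] by (simp add: y_def a_def B_def C_def)
  have circ: "(cos (s - t))\<^sup>2 + (sin (s - t))\<^sup>2 = 1"
    by simp
  have discriminant: "B\<^sup>2 - a * C = N\<^sup>2 * X"
    unfolding X_def B_def a_def C_def using circ by algebra
  have N_pos: "N > 0"
    using assms(1) by linarith
  have "N\<^sup>2 * X = (a * y - B)\<^sup>2"
    using quadratic discriminant by algebra
  then have "X \<ge> 0"
    using N_pos by (metis zero_le_power2 zero_le_mult_iff zero_less_power2 not_le less_irrefl)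
  then have "(N * sqrt X)\<^sup>2 = B\<^sup>2 - a * C" "N * sqrt X \<ge> 0"
    using discriminant N_pos by (simp_all add: power_mult_distrib)
  moreover have "P\<^sup>2 < N\<^sup>2"
    using power_strict_mono[OF assms(1) abs_ge_zero, of 2] by simp
  then have "a \<noteq> 0"
    by (simp add: a_def)
  moreover have "B = 0" if "C = 0"
  proof -
    have "B\<^sup>2 = P\<^sup>2 * C - (P * M * N * sin (s - t))\<^sup>2"
      unfolding B_def C_def using circ by algebra
    then have "B\<^sup>2 \<le> 0"
      using that by simp
    then show ?thesis
      by simp
  qed
  ultimately obtain \<sigma> :: real where "\<sigma> = 1 \<or> \<sigma> = -1" "y = C / (B + \<sigma> * (N * sqrt X))"
    using quadratic_root_reciprocal_form[OF quadratic] by blast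
  moreover have "r = L / N - (1 / N) * (L - N * r)" for r
    using N_pos by (simp add: field_simps)
  then have "(L + M * cos (s + x)) / (N + P * cos (t + x)) = L / N - (1 / N) * y"
    unfolding y_def by blast
  ultimately show ?thesis
    by (auto simp: B_def X_def mult.assoc)
qed

theorem theorem1:
  fixes P0 P1 c :: real and a1 b1 h g :: complex and xs :: real
  assumes "P0 > 0" "P1 > 0" "c > 0"
    and "a1 \<noteq> 0" "b1 \<noteq> 0" "h \<noteq> 0" "g \<noteq> 0"
    and "((gamma1 P0 P1 c a1 b1 h g) has_real_derivative 0) (at xs)"
  shows "let L' = P0 * ((cmod a1)\<^sup>2 + (cmod h)\<^sup>2);
             M' = 2 * P0 * cmod a1 * cmod h;
             N' = P1 * ((cmod b1)\<^sup>2 + (cmod g)\<^sup>2) + c;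
             P' = 2 * P1 * cmod b1 * cmod g;
             s = Arg a1 - Arg h;
             t = Arg b1 - Arg g;
             C' = (L' * P')\<^sup>2 + (M' * N')\<^sup>2 - 2 * L' * M' * N' * P' * cos (s - t)
         in \<exists>\<sigma>::real. (\<sigma> = 1 \<or> \<sigma> = -1) \<and>
              gamma1 P0 P1 c a1 b1 h g xs =
                L' / N' - (1 / N') * (C' / (P' * (L' * P' - M' * N' * cos (s - t))
                      + \<sigma> * N' * sqrt (C' - (M' * P' * sin (s - t))\<^sup>2)))"
proof -
  define L M N P s t where "L = P0 * ((cmod a1)\<^sup>2 + (cmod h)\<^sup>2)"
    and "M = 2 * P0 * cmod a1 * cmod h" and "N = P1 * ((cmod b1)\<^sup>2 + (cmod g)\<^sup>2) + c"
    and "P = 2 * P1 * cmod b1 * cmod g" and "s = Arg a1 - Arg h" and "t = Arg b1 - Arg g"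
  have "N - P = P1 * (cmod b1 - cmod g)\<^sup>2 + c" "P \<ge> 0"
    using assms(2) by (simp_all add: N_def P_def power2_eq_square algebra_simps)
  moreover have "P1 * (cmod b1 - cmod g)\<^sup>2 \<ge> 0"
    using assms(2) by simp
  ultimately have "\<bar>P\<bar> < N"
    using assms(3) by linarith
  moreover have "gamma1 P0 P1 c a1 b1 h g = (\<lambda>x. (L + M * cos (s + x)) / (N + P * cos (t + x)))"
    by (simp add: fun_eq_iff gamma1_eq_cos_ratio L_def M_def N_def P_def s_def t_def)
  ultimately show ?thesis
    using cos_ratio_stationary_value[of P N L M s t xs] assms(8)
    unfolding Let_def L_def M_def N_def P_def s_def t_def by simp
qed

end
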